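(* Let $R$ be an Artinian multiplication ring. Then every multiplication $R$-module is an epimorphic image of the $R$-module $R$ (i.e., is cyclic).
   Context: All rings are commutative with $1$ and all modules are unital. A ring $R$ is a multiplication ring if whenever $I,J$ are ideals of $R$ with $J\subseteq I$, there is an ideal $I'$ of $R$ with $J=I'I$. An $R$-module $M$ is a multiplication module if every submodule of $M$ equals $IM$ for some ideal $I$ of $R$. *)

theory Defs
  imports Main "HOL.Modules"
begin

text \<open>The commutative ring R with 1 is a type of class comm_ring_1; an R-module is a type
  of class ab_group_add together with a scalar multiplication satisfying the locale module.\<close>

definition is_ideal :: "'a::comm_ring_1 set \<Rightarrow> bool" where
  "is_ideal I \<longleftrightarrow> module.subspace ((*) :: 'a \<Rightarrow> 'a \<Rightarrow> 'a) I"

definition ideal_mult :: "'a::comm_ring_1 set \<Rightarrow> 'a set \<Rightarrow> 'a set" where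
  "ideal_mult I J = module.span ((*) :: 'a \<Rightarrow> 'a \<Rightarrow> 'a) {a * b | a b. a \<in> I \<and> b \<in> J}"

definition multiplication_ring :: "'a::comm_ring_1 itself \<Rightarrow> bool" where
  "multiplication_ring (_ :: 'a itself) \<longleftrightarrow>
     (\<forall>I J :: 'a set. is_ideal I \<and> is_ideal J \<and> J \<subseteq> I \<longrightarrow>
        (\<exists>I'. is_ideal I' \<and> J = ideal_mult I' I))"

definition artinian_ring :: "'a::comm_ring_1 itself \<Rightarrow> bool" where
  "artinian_ring (_ :: 'a itself) \<longleftrightarrow>
     (\<forall>f :: nat \<Rightarrow> 'a set. (\<forall>n. is_ideal (f n)) \<and> (\<forall>n. f (Suc n) \<subseteq> f n) \<longrightarrow>
        (\<exists>N. \<forall>n\<ge>N. f n = f N))"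

definition ideal_smult ::
  "('a::comm_ring_1 \<Rightarrow> 'b::ab_group_add \<Rightarrow> 'b) \<Rightarrow> 'a set \<Rightarrow> 'b set \<Rightarrow> 'b set" where
  "ideal_smult scale I M = module.span scale {scale r m | r m. r \<in> I \<and> m \<in> M}"

definition multiplication_module ::
  "('a::comm_ring_1 \<Rightarrow> 'b::ab_group_add \<Rightarrow> 'b) \<Rightarrow> bool" where
  "multiplication_module scale \<longleftrightarrow>
     (\<forall>N. module.subspace scale N \<longrightarrow> (\<exists>I. is_ideal I \<and> N = ideal_smult scale I UNIV))"

end

theory Submission
  imports Defs
begin

text \<open>An Artinian ring is \<pi>-regular, so for an idempotent \<open>e\<close> every \<open>r \<in> eR\<close> is nilpotent,
  a unit of \<open>eR\<close>, or generates a nonzero idempotent \<open>f \<noteq> e\<close> with \<open>fR \<subset> eR\<close>. By well-founded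
  induction on \<open>eR\<close> we show that \<open>eM\<close> is cyclic. If such an \<open>f\<close> exists, \<open>eM = fM \<oplus> (e - f)M\<close>
  with both summands cyclic by induction. Otherwise \<open>eR\<close> is local: writing \<open>Rz = IM\<close> for
  \<open>z \<in> eM\<close>, either some \<open>i \<in> I\<close> makes \<open>ie\<close> a unit and then \<open>eM \<subseteq> iM \<subseteq> Rz\<close>, or all \<open>ie\<close> are
  nilpotent; then \<open>eM\<close> lies in the submodule generated by nilpotent multiples, so
  \<open>z \<in> e(IM)\<close> is a nilpotent multiple \<open>bz\<close> of itself and \<open>z = 0\<close>. The case \<open>e = 1\<close> is the theorem.\<close>

lemma module_mult: "module ((*) :: 'a::comm_ring_1 \<Rightarrow> 'a \<Rightarrow> 'a)"
  by unfold_locales (auto simp: algebra_simps)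

lemma is_ideal_iff:
  "is_ideal (I :: 'a::comm_ring_1 set) \<longleftrightarrow>
     0 \<in> I \<and> (\<forall>x\<in>I. \<forall>y\<in>I. x + y \<in> I) \<and> (\<forall>c. \<forall>x\<in>I. c * x \<in> I)"
  unfolding is_ideal_def module.subspace_def[OF module_mult] by simp

lemma is_ideal_principal: "is_ideal (range ((*) (e :: 'a::comm_ring_1)))"
  unfolding is_ideal_iff
proof (intro conjI ballI allI)
  show "0 \<in> range ((*) e)" using range_eqI[of 0 "(*) e" 0] by simp
  show "x + y \<in> range ((*) e)" if "x \<in> range ((*) e)" "y \<in> range ((*) e)" for x y
    using that by (auto simp flip: distrib_left)
  show "c * x \<in> range ((*) e)" if x: "x \<in> range ((*) e)" for c x
  proof -
    obtain t where "x = e * t" using x by blast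
    then have "c * x = e * (c * t)" by (simp add: mult.left_commute)
    then show ?thesis by (metis rangeI)
  qed
qed

lemma principal_ideal_psubset_idempotent:
  fixes e f :: "'a::comm_ring_1"
  assumes "f * f = f" "f * e = f" "f \<noteq> e"
  shows "range ((*) f) \<subset> range ((*) e)"
proof
  show "range ((*) f) \<subseteq> range ((*) e)"
    using assms(2) by (clarsimp, metis mult.assoc mult.commute rangeI)
  show "range ((*) f) \<noteq> range ((*) e)"
  proof
    assume "range ((*) f) = range ((*) e)"
    then obtain t where "e = f * t" by (metis rangeE rangeI mult_1_right)
    then have "f * e = e" using assms(1) by (metis mult.assoc)
    with assms show False by simp
  qed
qed

definition nilpotent :: "'a::comm_ring_1 \<Rightarrow> bool" where
  "nilpotent a \<longleftrightarrow> (\<exists>n. a ^ n = 0)"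

lemma nilpotent_0 [simp]: "nilpotent 0"
  unfolding nilpotent_def by (metis power_one_right)

lemma nilpotent_add:
  assumes "nilpotent a" "nilpotent b"
  shows "nilpotent (a + b)"
proof -
  obtain m n where m: "a ^ m = 0" and n: "b ^ n = 0"
    using assms nilpotent_def by blast
  have "a ^ k * b ^ (m + n - k) = 0" if "k \<le> m + n" for k
  proof (cases "m \<le> k")
    case True
    then have "a ^ k = a ^ m * a ^ (k - m)" by (metis le_add_diff_inverse power_add)
    then show ?thesis using m by simp
  next
    case False
    then have "m + n - k = n + (m - k)" by simp
    then have "b ^ (m + n - k) = b ^ n * b ^ (m - k)" by (metis power_add)
    then show ?thesis using n by simp
  qed
  then have "(a + b) ^ (m + n) = 0"
    by (simp add: binomial_ring mult.assoc[symmetric] mult.commute)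
  then show ?thesis unfolding nilpotent_def by blast
qed

lemma nilpotent_mult_left: "nilpotent a \<Longrightarrow> nilpotent (c * a)"
  unfolding nilpotent_def by (metis mult_zero_right power_mult_distrib)

lemma artinian_ringD:
  assumes "artinian_ring TYPE('a::comm_ring_1)"
    and "\<And>n. is_ideal (I n :: 'a set)" and "\<And>n. I (Suc n) \<subseteq> I n"
  shows "\<exists>N. \<forall>n\<ge>N. I n = I N"
  using assms unfolding artinian_ring_def by blast

lemma artinian_wf_ideal_psubset:
  assumes "artinian_ring TYPE('a::comm_ring_1)"
  shows "wf {(J, I). is_ideal J \<and> is_ideal I \<and> J \<subset> (I :: 'a set)}"
proof (rule ccontr)
  assume "\<not> ?thesis"
  then obtain I :: "nat \<Rightarrow> 'a set"
    where I: "\<forall>n. is_ideal (I n) \<and> I (Suc n) \<subset> I n"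
    unfolding wf_iff_no_infinite_down_chain by blast
  then obtain N where "\<forall>n\<ge>N. I n = I N"
    using artinian_ringD[OF assms, of I] by blast
  then have "I (Suc N) = I N" by (metis le_SucI order_refl)
  with spec[OF I, of N] show False by simp
qed

lemma artinian_pi_regular:
  assumes "artinian_ring TYPE('a::comm_ring_1)"
  shows "\<exists>n s. 1 \<le> n \<and> (r :: 'a) ^ n = r ^ (n + 1) * s"
proof -
  define I where "I k = range ((*) (r ^ k))" for k
  have "I (Suc k) \<subseteq> I k" for k
  proof -
    have "r ^ Suc k * t = r ^ k * (r * t)" for t by (simp add: mult_ac)
    then show ?thesis unfolding I_def by blast
  qed
  then obtain N where "\<forall>n\<ge>N. I n = I N"
    using artinian_ringD[OF assms, of I] is_ideal_principal unfolding I_def by blast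
  then have "I (N + 1) = I (N + 2)" by (metis le_add1)
  then have "r ^ (N + 1) \<in> I (N + 2)" unfolding I_def by (metis mult_1_right rangeI)
  then obtain s where "r ^ (N + 1) = r ^ (N + 2) * s" unfolding I_def by blast
  then show ?thesis by (intro exI[of _ "N + 1"] exI[of _ s]) simp
qed

lemma idempotent_of_pi_regular:
  fixes r s :: "'a::comm_ring_1"
  assumes "1 \<le> n" and r: "r ^ n = r ^ (n + 1) * s"
  shows "\<exists>f u. f * f = f \<and> f = r * u \<and> r ^ n = f * r ^ n"
proof -
  have iter: "r ^ n = r ^ (n + k) * s ^ k" for k
  proof (induction k)
    case (Suc k)
    have "r ^ (n + k) = r ^ k * (r ^ (n + 1) * s)"
      using r by (simp add: power_add)
    also have "\<dots> = r ^ (n + Suc k) * s"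
      by (simp add: power_add mult_ac)
    finally have "r ^ n = (r ^ (n + Suc k) * s) * s ^ k"
      by (simp only: Suc.IH)
    then show ?case by (simp only: power_Suc mult.assoc)
  qed simp
  define f where "f = r ^ n * s ^ n"
  have fr: "f * r ^ n = r ^ n"
    using iter[of n] unfolding f_def by (simp add: power_add mult_ac)
  have "f * f = (f * r ^ n) * s ^ n"
    unfolding f_def by (simp add: mult_ac)
  also have "\<dots> = f"
    by (subst fr) (simp add: f_def)
  moreover note fr
  moreover have "f = r * (r ^ (n - 1) * s ^ n)"
    using assms(1) unfolding f_def
    by (metis (no_types) le_add_diff_inverse mult.assoc plus_1_eq_Suc power_Suc)
  ultimately show ?thesis by auto
qed

lemma artinian_idempotent_trichotomy:
  fixes e r :: "'a::comm_ring_1"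
  assumes "artinian_ring TYPE('a)" "r * e = r"
  shows "nilpotent r \<or> (\<exists>u. r * u = e) \<or> (\<exists>f. f * f = f \<and> f * e = f \<and> f \<noteq> 0 \<and> f \<noteq> e)"
proof -
  obtain n s where "1 \<le> n" "r ^ n = r ^ (n + 1) * s"
    using artinian_pi_regular[OF assms(1)] by blast
  then obtain f u where f: "f * f = f" "f = r * u" "r ^ n = f * r ^ n"
    using idempotent_of_pi_regular by blast
  have "f * e = f" using f(2) assms(2) by (metis mult.assoc mult.commute)
  moreover have "nilpotent r" if "f = 0" using f(3) that unfolding nilpotent_def by auto
  ultimately show ?thesis using f(1,2) by blast
qed

context module
begin

definition cyclic_summand :: "'a \<Rightarrow> bool" where
  "cyclic_summand e \<longleftrightarrow> (\<exists>g. range (scale e) = span {g})"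

lemma subspace_range_scale: "subspace (range (scale c))"
  using module_hom.subspace_image[OF module_hom_scale_self subspace_UNIV] .

lemma range_scale_idempotent:
  assumes "e * e = e"
  shows "w \<in> range (scale e) \<longleftrightarrow> scale e w = w"
  using assms by (metis rangeE rangeI scale_scale)

lemma cyclic_summand_orthogonal_sum:
  assumes e: "e * e = e" and f: "f * f = f" "f * e = f"
    and "cyclic_summand f" "cyclic_summand (e - f)"
  shows "cyclic_summand e"
proof -
  obtain g1 g2 where g1: "range (scale f) = span {g1}" and g2: "range (scale (e - f)) = span {g2}"
    using assms(4,5) unfolding cyclic_summand_def by blast
  have ef: "(e - f) * (e - f) = e - f" "(e - f) * e = e - f" and orth: "f * (e - f) = 0"
    using e f by (simp_all add: algebra_simps)
  have fg1: "scale f g1 = g1" and efg2: "scale (e - f) g2 = g2"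
    using g1 g2 range_scale_idempotent[OF f(1)] range_scale_idempotent[OF ef(1)]
    by (metis span_base singletonI)+
  have z1: "scale f g2 = 0" and z2: "scale (e - f) g1 = 0"
    using fg1 efg2 orth by (metis mult.commute scale_scale scale_zero_left)+
  have "range (scale e) \<subseteq> span {g1 + g2}"
  proof clarify
    fix m
    have "scale f m \<in> span {g1}" "scale (e - f) m \<in> span {g2}"
      unfolding g1[symmetric] g2[symmetric] by blast+
    then obtain c1 c2 where c1: "scale f m = scale c1 g1" and c2: "scale (e - f) m = scale c2 g2"
      by (auto simp: span_singleton)
    have "scale e m = scale f m + scale (e - f) m"
      by (simp flip: scale_left_distrib)
    also have "\<dots> = scale (c1 * f + c2 * (e - f)) (g1 + g2)"
      by (simp add: c1 c2 scale_left_distrib scale_right_distrib fg1 efg2 z1 z2 flip: scale_scale)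
    finally show "scale e m \<in> span {g1 + g2}" by (simp add: span_singleton)
  qed
  moreover have "span {g1 + g2} \<subseteq> range (scale e)"
  proof (rule span_minimal[OF _ subspace_range_scale])
    have "scale e g1 = g1" "scale e g2 = g2"
      using fg1 efg2 f(2) ef(2) by (metis mult.commute scale_scale)+
    then show "{g1 + g2} \<subseteq> range (scale e)"
      by (metis empty_subsetI insert_subset rangeI scale_right_distrib)
  qed
  ultimately show ?thesis unfolding cyclic_summand_def by blast
qed

lemma subspace_nilpotent_multiples: "subspace {scale b z | b. nilpotent b}"
proof (rule subspaceI)
  show "0 \<in> {scale b z | b. nilpotent b}"
    by (metis (mono_tags) mem_Collect_eq nilpotent_0 scale_zero_left)
  show "x + y \<in> {scale b z | b. nilpotent b}"
    if "x \<in> {scale b z | b. nilpotent b}" "y \<in> {scale b z | b. nilpotent b}" for x y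
    using that nilpotent_add by (fastforce simp flip: scale_left_distrib)
  show "scale c x \<in> {scale b z | b. nilpotent b}" if "x \<in> {scale b z | b. nilpotent b}" for c x
    using that nilpotent_mult_left by fastforce
qed

lemma nilpotent_fixed_point_eq_0:
  assumes "nilpotent b" "scale b z = z"
  shows "z = 0"
proof -
  have "scale (b ^ k) z = z" for k
    by (induction k) (simp_all add: assms(2) flip: scale_scale)
  with assms(1) show ?thesis unfolding nilpotent_def by (metis scale_zero_left)
qed

lemma multiplication_module_span_singleton:
  assumes "multiplication_module scale"
  obtains I where "span {z} = ideal_smult scale I UNIV"
  using assms subspace_span unfolding multiplication_module_def by blast

lemma scale_ideal_smult:
  "scale c ` ideal_smult scale I UNIV = span {scale (c * i) m | i m. i \<in> I}"
proof -
  have "scale c ` {scale i m | i m. i \<in> I \<and> m \<in> UNIV} = {scale (c * i) m | i m. i \<in> I}"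
    by (force simp: image_iff)
  then show ?thesis
    unfolding ideal_smult_def module_hom.span_image[OF module_hom_scale_self, symmetric] by simp
qed

lemma idempotent_part_eq_0_if_nil:
  assumes mm: "multiplication_module scale" and e: "e * e = e"
    and nil: "range (scale e) \<subseteq> span {scale a m | a m. nilpotent a}"
  shows "scale e w = 0"
proof -
  define z where "z = scale e w"
  obtain I where I: "span {z} = ideal_smult scale I UNIV"
    using mm by (rule multiplication_module_span_singleton)
  have I_mult: "scale i m \<in> range (\<lambda>c. scale c z)" if "i \<in> I" for i m
    using that unfolding span_singleton[symmetric] I ideal_smult_def by (blast intro: span_base)
  have nil_mult: "scale i ` span {scale a m | a m. nilpotent a} \<subseteq> {scale b z | b. nilpotent b}"
    if "i \<in> I" for i
  proof -
    have "scale i (scale a m) \<in> {scale b z | b. nilpotent b}" if "nilpotent a" for a m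
    proof -
      obtain c where c: "scale i m = scale c z"
        using I_mult[OF \<open>i \<in> I\<close>, of m] by blast
      have "scale i (scale a m) = scale a (scale i m)"
        by (rule scale_left_commute)
      also have "\<dots> = scale (c * a) z"
        by (simp add: c mult.commute)
      finally show ?thesis
        using nilpotent_mult_left[OF that] by blast
    qed
    then have "span (scale i ` {scale a m | a m. nilpotent a}) \<subseteq> {scale b z | b. nilpotent b}"
      by (intro span_minimal subspace_nilpotent_multiples) blast
    then show ?thesis by (simp add: module_hom.span_image[OF module_hom_scale_self])
  qed
  have "z = scale e z" using e unfolding z_def by simp
  also have "\<dots> \<in> scale e ` ideal_smult scale I UNIV"
    using I by (blast intro: span_base)
  also have "\<dots> = span {scale (e * i) m | i m. i \<in> I}"
    by (rule scale_ideal_smult)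
  also have "\<dots> \<subseteq> {scale b z | b. nilpotent b}"
  proof (intro span_minimal subspace_nilpotent_multiples subsetI)
    fix x assume "x \<in> {scale (e * i) m | i m. i \<in> I}"
    then obtain i m where "i \<in> I" and x: "x = scale i (scale e m)"
      by (auto simp: mult.commute)
    then show "x \<in> {scale b z | b. nilpotent b}"
      using nil_mult nil by blast
  qed
  finally obtain b where "nilpotent b" "scale b z = z" by auto
  then show ?thesis unfolding z_def by (rule nilpotent_fixed_point_eq_0)
qed

lemma cyclic_summand_if_local:
  assumes mm: "multiplication_module scale" and e: "e * e = e"
    and local: "\<And>r. r * e = r \<Longrightarrow> nilpotent r \<or> (\<exists>u. r * u = e)"
  shows "cyclic_summand e"
proof (cases "\<exists>w I i. span {scale e w} = ideal_smult scale I UNIV \<and> i \<in> I \<and> \<not> nilpotent (i * e)")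
  case True
  then obtain w I i where I: "span {scale e w} = ideal_smult scale I UNIV" "i \<in> I"
    and unit: "\<not> nilpotent (i * e)"
    by blast
  have "i * e * e = i * e" using e by (simp add: mult.assoc)
  then obtain u where u: "i * e * u = e"
    using local unit by blast
  have "range (scale e) \<subseteq> span {scale e w}"
  proof clarify
    fix m
    have "scale e m = scale i (scale (e * u) m)"
      using u by (metis mult.assoc scale_scale)
    then show "scale e m \<in> span {scale e w}"
      unfolding I(1) ideal_smult_def using I(2) by (blast intro: span_base)
  qed
  moreover have "span {scale e w} \<subseteq> range (scale e)"
    by (simp add: span_minimal subspace_range_scale)
  ultimately show ?thesis unfolding cyclic_summand_def by blast
next
  case False
  have "range (scale e) \<subseteq> span {scale a m | a m. nilpotent a}"
  proof clarify
    fix w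
    obtain I where I: "span {scale e w} = ideal_smult scale I UNIV"
      using mm by (rule multiplication_module_span_singleton)
    have "scale e w = scale e (scale e w)" using e by simp
    also have "\<dots> \<in> scale e ` ideal_smult scale I UNIV"
      using I by (blast intro: span_base)
    also have "\<dots> = span {scale (e * i) m | i m. i \<in> I}"
      by (rule scale_ideal_smult)
    also have "\<dots> \<subseteq> span {scale a m | a m. nilpotent a}"
      using False I by (intro span_mono) (auto simp: mult.commute)
    finally show "scale e w \<in> span {scale a m | a m. nilpotent a}" .
  qed
  then have "range (scale e) = span {0}"
    using idempotent_part_eq_0_if_nil[OF mm e] by (auto simp: span_singleton)
  then show ?thesis unfolding cyclic_summand_def by blast
qed

lemma cyclic_summand_artinian:
  assumes art: "artinian_ring TYPE('a)" and mm: "multiplication_module scale"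
    and "e * e = e"
  shows "cyclic_summand e"
proof -
  have "wf (inv_image {(J, I). is_ideal J \<and> is_ideal I \<and> J \<subset> I} (\<lambda>e :: 'a. range ((*) e)))"
    using artinian_wf_ideal_psubset[OF art] by (rule wf_inv_image)
  then show ?thesis using assms(3)
  proof (induction e rule: wf_induct_rule)
    case (less e)
    have smaller: "cyclic_summand f" if "f * f = f" "f * e = f" "f \<noteq> e" for f
      using less.IH[of f] principal_ideal_psubset_idempotent[OF that] that(1)
        is_ideal_principal[of e] is_ideal_principal[of f]
      by simp
    consider (split) f where "f * f = f" "f * e = f" "f \<noteq> 0" "f \<noteq> e"
      | (local) "\<And>r. r * e = r \<Longrightarrow> nilpotent r \<or> (\<exists>u. r * u = e)"
      using artinian_idempotent_trichotomy[OF art] by blast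
    then show ?case
    proof cases
      case split
      have "(e - f) * (e - f) = e - f" "(e - f) * e = e - f" "e - f \<noteq> e"
        using less.prems split by (simp_all add: algebra_simps)
      then show ?thesis
        using cyclic_summand_orthogonal_sum[OF less.prems split(1,2)] smaller split by blast
    next
      case local
      then show ?thesis by (rule cyclic_summand_if_local[OF mm less.prems])
    qed
  qed
qed

end

theorem corollary2p5:
  fixes scale :: "'a::comm_ring_1 \<Rightarrow> 'b::ab_group_add \<Rightarrow> 'b"
  assumes "artinian_ring TYPE('a)"
    and "multiplication_ring TYPE('a)"
    and "module scale"
    and "multiplication_module scale"
  shows "\<exists>f. module_hom ((*) :: 'a \<Rightarrow> 'a \<Rightarrow> 'a) scale f \<and> surj f"
proof -
  interpret module scale by fact
  have "cyclic_summand 1"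
    by (rule cyclic_summand_artinian[OF assms(1,4)]) simp
  then obtain g where "range (scale 1) = span {g}"
    unfolding cyclic_summand_def by blast
  then have "surj (\<lambda>c. scale c g)" by (simp add: span_singleton)
  then show ?thesis using module_hom_scale_left by blast
qed

end
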